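(* Let $P_1(t),\dots,P_J(t)$ be pairwise relatively prime reciprocal polynomials and $P(t)=\prod_{j=1}^JP_j(t)$. Then the canonical projections $\mathfrak{OA}/\mathfrak I_{P(t)}\to\mathfrak{OA}/\mathfrak I_{P_j(t)}$ induce a Lie algebra isomorphism $\mathfrak{OA}/\mathfrak I_{P(t)}\xrightarrow{\sim}\prod_{j=1}^J\mathfrak{OA}/\mathfrak I_{P_j(t)}$.
   Context: Work over $\mathbb C$. $\mathfrak{sl}_2$ has basis $e,f,h$ with $[e,f]=h$, $[h,e]=2e$, $[h,f]=-2f$. $L(\mathfrak{sl}_2)=\mathbb C[t,t^{-1}]\otimes\mathfrak{sl}_2$ is the loop algebra with bracket $[p(t)x,q(t)y]=p(t)q(t)[x,y]$. The Onsager algebra is the Lie subalgebra $\mathfrak{OA}=\{p(t)e+p(t^{-1})f+q(t)h:\ p,q\in\mathbb C[t,t^{-1}],\ q(t^{-1})=-q(t)\}$ of $L(\mathfrak{sl}_2)$. A reciprocal polynomial is a nonconstant monic $P\in\mathbb C[t]$ with $P(t)=\pm t^{\deg P}P(t^{-1})$. For a reciprocal polynomial $P$, $\mathfrak I_{P(t)}=\{p(t)e+p(t^{-1})f+q(t)h\in\mathfrak{OA}:\ p(t),q(t)\in P(t)\mathbb C[t,t^{-1}]\}$; it is an ideal of $\mathfrak{OA}$, and $\mathfrak I_{P}\subseteq\mathfrak I_Q$ when $Q\mid P$. *)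

theory Defs
  imports "HOL-Library.Poly_Mapping" "HOL-Library.FuncSet" "HOL-Computational_Algebra.Polynomial"
begin

text \<open>Laurent polynomials C[t,t^-1] as finitely supported functions int to complex;
  the convolution product of Poly_Mapping is the Laurent product.\<close>
type_synonym laurent = "int \<Rightarrow>\<^sub>0 complex"

definition lvar :: laurent where "lvar = Poly_Mapping.single 1 1"

definition lconst :: "complex \<Rightarrow> laurent" where "lconst c = Poly_Mapping.single 0 c"

definition linv :: "laurent \<Rightarrow> laurent" where
  "linv p = Abs_poly_mapping (\<lambda>n. Poly_Mapping.lookup p (- n))"

definition of_cpoly :: "complex poly \<Rightarrow> laurent" where
  "of_cpoly P = (\<Sum>i\<le>degree P. Poly_Mapping.single (int i) (coeff P i))"

definition reciprocal :: "complex poly \<Rightarrow> bool" where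
  "reciprocal P \<longleftrightarrow> degree P > 0 \<and> lead_coeff P = 1 \<and>
     (of_cpoly P = lvar ^ degree P * linv (of_cpoly P) \<or>
      of_cpoly P = - (lvar ^ degree P * linv (of_cpoly P)))"

text \<open>An element a e + b f + c h of the loop algebra L(sl2) is the triple (a,b,c).\<close>
type_synonym loopel = "laurent \<times> laurent \<times> laurent"

definition ladd :: "loopel \<Rightarrow> loopel \<Rightarrow> loopel" where
  "ladd x y = (case x of (a,b,c) \<Rightarrow> case y of (a',b',c') \<Rightarrow> (a+a', b+b', c+c'))"

definition lsmult :: "complex \<Rightarrow> loopel \<Rightarrow> loopel" where
  "lsmult s x = (case x of (a,b,c) \<Rightarrow> (lconst s * a, lconst s * b, lconst s * c))"

text \<open>[e,f]=h, [h,e]=2e, [h,f]=-2f, extended bilinearly over C[t,t^-1]\<close>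
definition lbracket :: "loopel \<Rightarrow> loopel \<Rightarrow> loopel" where
  "lbracket x y = (case x of (a,b,c) \<Rightarrow> case y of (a',b',c') \<Rightarrow>
     (2 * (c * a' - a * c'), 2 * (b * c' - c * b'), a * b' - b * a'))"

definition OA :: "loopel set" where
  "OA = {(p, linv p, q) | p q. linv q = - q}"

definition Iid :: "complex poly \<Rightarrow> loopel set" where
  "Iid P = {(p, linv p, q) | p q. (p, linv p, q) \<in> OA \<and>
      (\<exists>r. p = of_cpoly P * r) \<and> (\<exists>r. q = of_cpoly P * r)}"

definition coset :: "loopel \<Rightarrow> loopel set \<Rightarrow> loopel set" where
  "coset x I = ladd x ` I"

definition quot :: "loopel set \<Rightarrow> loopel set set" where
  "quot I = (\<lambda>x. coset x I) ` OA"

definition rep :: "loopel set \<Rightarrow> loopel" where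
  "rep X = (SOME x. x \<in> X)"

definition qadd :: "loopel set \<Rightarrow> loopel set \<Rightarrow> loopel set \<Rightarrow> loopel set" where
  "qadd I X Y = coset (ladd (rep X) (rep Y)) I"

definition qsmult :: "loopel set \<Rightarrow> complex \<Rightarrow> loopel set \<Rightarrow> loopel set" where
  "qsmult I s X = coset (lsmult s (rep X)) I"

definition qbracket :: "loopel set \<Rightarrow> loopel set \<Rightarrow> loopel set \<Rightarrow> loopel set" where
  "qbracket I X Y = coset (lbracket (rep X) (rep Y)) I"

end

(*
  Write I_A = {(p, p(t^-1), q) in OA. A dvd p and A dvd q} for any Laurent polynomial A.
  Coprime polynomials become comaximal Laurent polynomials (Bezout), and the Chinese remainder
  theorem in C[t,t^-1] does the rest. Injectivity: an element lying in every I_(P_j) has its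
  e- and h-components divisible by all P_j, hence by their product.
  Surjectivity: solve the congruences for the e- and the h-components separately, then replace
  the h-component q by (q - q(t^-1))/2 to make it odd. The whole argument rests on the fact that
  a reciprocal P divides P(t^-1) = +-t^(-deg P) P in C[t,t^-1]: this makes divisibility by P
  stable under t -> t^-1, which keeps the congruences through the antisymmetrization and makes
  I_P an ideal, so that the quotient operations are well defined on cosets.
*)
theory Submission
  imports Defs "HOL-Computational_Algebra.Polynomial_Factorial"
    "HOL-Computational_Algebra.Field_as_Ring" "HOL-Library.Product_Plus"
begin

lemma lookup_linv: "Poly_Mapping.lookup (linv p) n = Poly_Mapping.lookup p (- n)"
proof -
  have "{n. Poly_Mapping.lookup p (- n) \<noteq> 0} = uminus ` {n. Poly_Mapping.lookup p n \<noteq> 0}"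
    by (auto simp: image_iff) (metis minus_minus)
  then have "finite {n. Poly_Mapping.lookup p (- n) \<noteq> 0}"
    by simp
  then show ?thesis
    unfolding linv_def by simp
qed

lemma linv_add: "linv (p + q) = linv p + linv q"
  by (rule poly_mapping_eqI) (simp add: lookup_linv lookup_add)

lemma linv_diff: "linv (p - q) = linv p - linv q"
  by (rule poly_mapping_eqI) (simp add: lookup_linv lookup_minus)

lemma linv_zero: "linv 0 = 0"
  by (rule poly_mapping_eqI) (simp add: lookup_linv)

lemma linv_linv: "linv (linv p) = p"
  by (rule poly_mapping_eqI) (simp add: lookup_linv)

lemma linv_single: "linv (Poly_Mapping.single k c) = Poly_Mapping.single (- k) c"
  by (rule poly_mapping_eqI) (auto simp: lookup_linv lookup_single when_def)

lemma linv_one: "linv 1 = 1"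
  using linv_single[of 0 1] by simp

lemma linv_two: "linv 2 = 2"
  by (metis linv_add linv_one one_add_one)

lemma linv_lconst: "linv (lconst c) = lconst c"
  by (simp add: lconst_def linv_single)

lemma linv_sum: "linv (sum f A) = (\<Sum>a\<in>A. linv (f a))"
  by (induction A rule: infinite_finite_induct) (auto simp: linv_zero linv_add)

lemma sum_single_lookup:
  fixes p :: "'a \<Rightarrow>\<^sub>0 'b::comm_monoid_add"
  shows "(\<Sum>k\<in>Poly_Mapping.keys p. Poly_Mapping.single k (Poly_Mapping.lookup p k)) = p"
proof (rule poly_mapping_eqI)
  fix n
  show "Poly_Mapping.lookup (\<Sum>k\<in>Poly_Mapping.keys p. Poly_Mapping.single k (Poly_Mapping.lookup p k)) n
      = Poly_Mapping.lookup p n"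
    unfolding lookup_sum lookup_single
    by (cases "n \<in> Poly_Mapping.keys p") (auto simp: when_def in_keys_iff)
qed

lemma linv_mult: "linv (p * q) = linv p * linv q"
proof -
  define mp where "mp a = Poly_Mapping.single a (Poly_Mapping.lookup p a)" for a
  define mq where "mq b = Poly_Mapping.single b (Poly_Mapping.lookup q b)" for b
  have "p * q = (\<Sum>a\<in>Poly_Mapping.keys p. \<Sum>b\<in>Poly_Mapping.keys q. mp a * mq b)"
    unfolding mp_def mq_def sum_product[symmetric] sum_single_lookup ..
  moreover have "linv p * linv q
      = (\<Sum>a\<in>Poly_Mapping.keys p. \<Sum>b\<in>Poly_Mapping.keys q. linv (mp a) * linv (mq b))"
    unfolding mp_def mq_def sum_product[symmetric] linv_sum[symmetric] sum_single_lookup ..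
  ultimately show ?thesis
    by (simp add: mp_def mq_def linv_sum linv_single mult_single)
qed

lemma lconst_half_add_half: "lconst (1/2) + lconst (1/2) = 1"
  by (simp add: lconst_def single_add[symmetric])

lemma lookup_of_cpoly:
  "Poly_Mapping.lookup (of_cpoly P) n = (if n \<ge> 0 then coeff P (nat n) else 0)"
proof -
  have "Poly_Mapping.lookup (of_cpoly P) n = (\<Sum>i\<le>degree P. (coeff P i when int i = n))"
    unfolding of_cpoly_def lookup_sum lookup_single by simp
  also have "\<dots> = (if n \<ge> 0 then coeff P (nat n) else 0)"
  proof (cases "n \<ge> 0 \<and> nat n \<le> degree P")
    case True
    then have "(\<Sum>i\<le>degree P. (coeff P i when int i = n)) = (\<Sum>i\<in>{nat n}. (coeff P i when int i = n))"
      by (intro sum.mono_neutral_right) (auto simp: when_def)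
    then show ?thesis
      using True by (simp add: when_def)
  next
    case False
    then have "(\<Sum>i\<le>degree P. (coeff P i when int i = n)) = 0"
      by (intro sum.neutral) (auto simp: when_def)
    then show ?thesis
      using False by (auto simp: coeff_eq_0)
  qed
  finally show ?thesis .
qed

lemma of_cpoly_add: "of_cpoly (P + Q) = of_cpoly P + of_cpoly Q"
  by (rule poly_mapping_eqI) (simp add: lookup_of_cpoly lookup_add)

lemma of_cpoly_zero: "of_cpoly 0 = 0"
  by (simp add: of_cpoly_def)

lemma of_cpoly_sum: "of_cpoly (sum f A) = (\<Sum>a\<in>A. of_cpoly (f a))"
  by (induction A rule: infinite_finite_induct) (auto simp: of_cpoly_add of_cpoly_zero)

lemma of_cpoly_monom: "of_cpoly (monom c k) = Poly_Mapping.single (int k) c"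
  by (rule poly_mapping_eqI) (auto simp: lookup_of_cpoly lookup_single when_def coeff_monom)

lemma of_cpoly_one: "of_cpoly 1 = 1"
  using of_cpoly_monom[of 1 0] by (simp add: monom_0 one_pCons)

lemma of_cpoly_mult: "of_cpoly (P * Q) = of_cpoly P * of_cpoly Q"
proof -
  have "P * Q = (\<Sum>i\<le>degree P. \<Sum>j\<le>degree Q. monom (coeff P i) i * monom (coeff Q j) j)"
    unfolding sum_product[symmetric] poly_as_sum_of_monoms ..
  then have "of_cpoly (P * Q) = (\<Sum>i\<le>degree P. \<Sum>j\<le>degree Q.
      Poly_Mapping.single (int i) (coeff P i) * Poly_Mapping.single (int j) (coeff Q j))"
    by (simp add: of_cpoly_sum mult_monom of_cpoly_monom mult_single)
  then show ?thesis
    by (simp add: of_cpoly_def sum_product)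
qed

lemma of_cpoly_prod: "of_cpoly (prod f S) = (\<Prod>j\<in>S. of_cpoly (f j))"
  by (induction S rule: infinite_finite_induct) (auto simp: of_cpoly_mult of_cpoly_one)

lemma lvar_power: "lvar ^ n = Poly_Mapping.single (int n) 1"
  by (induction n) (simp_all add: lvar_def mult_single add.commute)

lemma of_cpoly_dvd_linv:
  assumes "reciprocal P"
  shows "of_cpoly P dvd linv (of_cpoly P)"
proof -
  define d where "d = degree P"
  define w :: laurent where "w = Poly_Mapping.single (- int d) 1"
  have w: "w * lvar ^ d = 1"
    by (simp add: w_def lvar_power mult_single)
  from assms consider (plus) "of_cpoly P = lvar ^ d * linv (of_cpoly P)"
    | (minus) "of_cpoly P = - (lvar ^ d * linv (of_cpoly P))"
    unfolding reciprocal_def d_def by blast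
  then obtain u where "linv (of_cpoly P) = u * of_cpoly P"
  proof cases
    case plus
    then have "w * of_cpoly P = w * (lvar ^ d * linv (of_cpoly P))"
      by (rule arg_cong)
    then show ?thesis
      using that[of w] by (simp add: mult.assoc[symmetric] w)
  next
    case minus
    then have "w * of_cpoly P = w * - (lvar ^ d * linv (of_cpoly P))"
      by (rule arg_cong)
    then show ?thesis
      using that[of "- w"] by (simp add: mult.assoc[symmetric] w)
  qed
  then show ?thesis
    by (simp add: dvd_triv_right)
qed

lemma dvd_linv:
  assumes "A dvd linv A" "A dvd p"
  shows "A dvd linv p"
  using assms by (auto simp: dvd_def linv_mult)

lemma dvd_antisymmetrization:
  assumes "A dvd linv A" "linv c = - c" "A dvd q - c"
  shows "A dvd lconst (1/2) * (q - linv q) - c"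
proof -
  have "c = lconst (1/2) * c + lconst (1/2) * c"
    by (metis distrib_right lconst_half_add_half mult_1)
  then have "lconst (1/2) * (q - linv q) - c = lconst (1/2) * ((q - c) - linv (q - c))"
    using assms(2) by (simp add: linv_diff algebra_simps)
  moreover have "A dvd linv (q - c)"
    using assms(1,3) by (rule dvd_linv)
  ultimately show ?thesis
    using assms(3) by simp
qed

lemma linv_antisymmetrization: "linv (lconst (1/2) * (q - linv q)) = - (lconst (1/2) * (q - linv q))"
  by (simp add: linv_mult linv_lconst linv_diff linv_linv algebra_simps)

definition comaximal :: "'a::comm_ring_1 \<Rightarrow> 'a \<Rightarrow> bool" where
  "comaximal x y \<longleftrightarrow> (\<exists>a b. a * x + b * y = 1)"

lemma comaximal_mult_right:
  assumes "comaximal x y" "comaximal x z"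
  shows "comaximal x (y * z)"
proof -
  obtain a b a' b' where ab: "a * x + b * y = 1" and ab': "a' * x + b' * z = 1"
    using assms unfolding comaximal_def by blast
  have "(a * a' * x + a * b' * z + b * y * a') * x + (b * b') * (y * z)
      = (a * x + b * y) * (a' * x + b' * z)"
    by (simp add: algebra_simps)
  also have "\<dots> = 1"
    by (simp add: ab ab')
  finally show ?thesis
    unfolding comaximal_def by blast
qed

lemma comaximal_one_right: "comaximal x 1"
  unfolding comaximal_def by (rule exI[of _ 0], rule exI[of _ 1]) simp

lemma comaximal_prod_right:
  assumes "\<And>j. j \<in> S \<Longrightarrow> comaximal x (f j)"
  shows "comaximal x (prod f S)"
  using assms
  by (induction S rule: infinite_finite_induct) (auto simp: comaximal_one_right comaximal_mult_right)

lemma mult_dvd_if_comaximal: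
  assumes "comaximal x y" "x dvd p" "y dvd p"
  shows "x * y dvd p"
proof -
  obtain a b where ab: "a * x + b * y = 1"
    using assms(1) unfolding comaximal_def by blast
  obtain r s where r: "p = x * r" and s: "p = y * s"
    using assms(2,3) by (meson dvdE)
  have "p = a * x * p + b * y * p"
    using ab by (metis distrib_right mult_1)
  also have "a * x * p = x * y * (a * s)"
    using s by (simp add: algebra_simps)
  also have "b * y * p = x * y * (b * r)"
    using r by (simp add: algebra_simps)
  finally show ?thesis
    by (metis distrib_left dvd_triv_left)
qed

lemma prod_dvd_if_pairwise_comaximal:
  assumes "finite S" "pairwise (\<lambda>i j. comaximal (f i) (f j)) S" "\<And>j. j \<in> S \<Longrightarrow> f j dvd p"
  shows "prod f S dvd p"
  using assms
proof (induction S rule: finite_induct)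
  case (insert j S)
  have "comaximal (f j) (prod f S)"
    using insert.hyps insert.prems(1) by (intro comaximal_prod_right) (auto simp: pairwise_def)
  moreover have "prod f S dvd p"
    using insert by (auto intro: pairwise_subset)
  ultimately show ?case
    using insert by (simp add: mult_dvd_if_comaximal)
qed simp

lemma chinese_remainder_comaximal:
  assumes "finite S" "pairwise (\<lambda>i j. comaximal (f i) (f j)) S"
  shows "\<exists>x. \<forall>j\<in>S. f j dvd x - y j"
proof -
  have "\<exists>e. f j dvd e - 1 \<and> (\<forall>i\<in>S - {j}. f i dvd e)" if "j \<in> S" for j
  proof -
    have "comaximal (f j) (\<Prod>i\<in>S - {j}. f i)"
      using assms(2) that by (intro comaximal_prod_right) (auto simp: pairwise_def)
    then obtain a b where ab: "a * f j + b * (\<Prod>i\<in>S - {j}. f i) = 1"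
      unfolding comaximal_def by blast
    have "b * (\<Prod>i\<in>S - {j}. f i) - 1 = f j * (- a)"
      using ab by (simp add: algebra_simps)
    moreover have "f i dvd b * (\<Prod>i\<in>S - {j}. f i)" if "i \<in> S - {j}" for i
      using assms(1) that by (simp add: dvd_prodI)
    ultimately show ?thesis
      by (metis dvd_triv_left)
  qed
  then obtain e where e: "\<And>j. j \<in> S \<Longrightarrow> f j dvd e j - 1"
      "\<And>i j. j \<in> S \<Longrightarrow> i \<in> S - {j} \<Longrightarrow> f i dvd e j"
    by metis
  have "f k dvd (\<Sum>j\<in>S. e j * y j) - y k" if k: "k \<in> S" for k
  proof -
    have "(\<Sum>j\<in>S. e j * y j) - y k = (e k - 1) * y k + (\<Sum>j\<in>S - {k}. e j * y j)"
      using assms(1) k by (simp add: sum.remove algebra_simps)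
    moreover have "f k dvd (\<Sum>j\<in>S - {k}. e j * y j)"
      using e(2) k by (intro dvd_sum) auto
    ultimately show ?thesis
      using e(1)[OF k] by simp
  qed
  then show ?thesis
    by blast
qed

lemma comaximal_of_cpoly:
  assumes "coprime P Q"
  shows "comaximal (of_cpoly P) (of_cpoly Q)"
proof -
  obtain a b where "a * P + b * Q = 1"
    using bezout_coefficients_fst_snd[of P Q] assms by (auto simp: coprime_iff_gcd_eq_1)
  then have "of_cpoly a * of_cpoly P + of_cpoly b * of_cpoly Q = 1"
    by (metis of_cpoly_add of_cpoly_mult of_cpoly_one)
  then show ?thesis
    unfolding comaximal_def by blast
qed

definition add_subgroup :: "'a::ab_group_add set \<Rightarrow> bool" where
  "add_subgroup I \<longleftrightarrow> 0 \<in> I \<and> (\<forall>x\<in>I. \<forall>y\<in>I. x - y \<in> I)"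

lemma add_subgroup_diff: "add_subgroup I \<Longrightarrow> x \<in> I \<Longrightarrow> y \<in> I \<Longrightarrow> x - y \<in> I"
  unfolding add_subgroup_def by blast

lemma add_subgroup_zero: "add_subgroup I \<Longrightarrow> 0 \<in> I"
  unfolding add_subgroup_def by blast

lemma add_subgroup_add:
  assumes "add_subgroup I" "x \<in> I" "y \<in> I"
  shows "x + y \<in> I"
proof -
  have "0 - y \<in> I"
    using assms(1) add_subgroup_zero[OF assms(1)] assms(3) by (rule add_subgroup_diff)
  then have "x - (0 - y) \<in> I"
    by (rule add_subgroup_diff[OF assms(1,2)])
  then show ?thesis
    by simp
qed

lemma ladd_eq_plus: "ladd x y = x + y"
  by (cases x; cases y) (simp add: ladd_def)

lemma OA_iff [simp]: "(a, b, c) \<in> OA \<longleftrightarrow> b = linv a \<and> linv c = - c"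
  unfolding OA_def by auto

lemma OA_add: "x \<in> OA \<Longrightarrow> y \<in> OA \<Longrightarrow> x + y \<in> OA"
  by (cases x; cases y) (auto simp: linv_add)

lemma OA_diff: "x \<in> OA \<Longrightarrow> y \<in> OA \<Longrightarrow> x - y \<in> OA"
  by (cases x; cases y) (auto simp: linv_diff)

lemma OA_lbracket: "x \<in> OA \<Longrightarrow> y \<in> OA \<Longrightarrow> lbracket x y \<in> OA"
  by (cases x; cases y) (auto simp: lbracket_def linv_mult linv_diff linv_linv linv_two algebra_simps)

lemma lsmult_diff: "lsmult s x - lsmult s y = lsmult s (x - y)"
  by (cases x; cases y) (auto simp: lsmult_def algebra_simps)

lemma lbracket_diff_diff: "lbracket x' y' - lbracket x y = lbracket (x' - x) y' + lbracket x (y' - y)"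
  by (cases x; cases y; cases x'; cases y') (auto simp: lbracket_def algebra_simps)

definition OA_ideal :: "laurent \<Rightarrow> loopel set" where
  "OA_ideal A = {x \<in> OA. A dvd fst x \<and> A dvd snd (snd x)}"

lemma Iid_eq_OA_ideal: "Iid P = OA_ideal (of_cpoly P)"
  unfolding Iid_def OA_ideal_def by (auto simp: dvd_def OA_def)

lemma OA_ideal_iff [simp]: "(a, b, c) \<in> OA_ideal A \<longleftrightarrow> (a, b, c) \<in> OA \<and> A dvd a \<and> A dvd c"
  unfolding OA_ideal_def by auto

lemma OA_ideal_subset_OA: "OA_ideal A \<subseteq> OA"
  unfolding OA_ideal_def by auto

lemma OA_ideal_antimono: "A dvd B \<Longrightarrow> OA_ideal B \<subseteq> OA_ideal A"
  unfolding OA_ideal_def using dvd_trans by blast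

lemma OA_ideal_lsmult: "x \<in> OA_ideal A \<Longrightarrow> lsmult s x \<in> OA_ideal A"
  by (cases x) (auto simp: lsmult_def linv_mult linv_lconst)

lemma OA_ideal_lbracket_right:
  assumes "A dvd linv A" "x \<in> OA" "y \<in> OA_ideal A"
  shows "lbracket x y \<in> OA_ideal A"
proof (cases x; cases y)
  fix a b c a' b' c'
  assume x: "x = (a, b, c)" and y: "y = (a', b', c')"
  have "A dvd a'" "A dvd c'" "A dvd linv a'"
    using assms y by (auto intro: dvd_linv)
  moreover have "lbracket x y \<in> OA"
    using assms OA_ideal_subset_OA OA_lbracket by blast
  ultimately show ?thesis
    using x y assms(2,3) by (auto simp: lbracket_def)
qed

lemma OA_ideal_lbracket_left:
  assumes "A dvd linv A" "x \<in> OA_ideal A" "y \<in> OA"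
  shows "lbracket x y \<in> OA_ideal A"
proof (cases x; cases y)
  fix a b c a' b' c'
  assume x: "x = (a, b, c)" and y: "y = (a', b', c')"
  have "A dvd a" "A dvd c" "A dvd linv a"
    using assms x by (auto intro: dvd_linv)
  moreover have "lbracket x y \<in> OA"
    using assms OA_ideal_subset_OA OA_lbracket by blast
  ultimately show ?thesis
    using x y assms(2,3) by (auto simp: lbracket_def)
qed

lemma add_subgroup_OA_ideal: "add_subgroup (OA_ideal A)"
  unfolding add_subgroup_def OA_ideal_def
  by (auto simp: OA_diff zero_prod_def linv_zero simp flip: fst_diff snd_diff)

lemma self_in_coset: "add_subgroup I \<Longrightarrow> x \<in> coset x I"
  unfolding coset_def ladd_eq_plus by (rule image_eqI[of _ _ 0]) (simp_all add: add_subgroup_zero)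

lemma coset_eq_iff:
  assumes "add_subgroup I"
  shows "coset x I = coset y I \<longleftrightarrow> x - y \<in> I"
proof
  assume "coset x I = coset y I"
  then have "x \<in> coset y I"
    using self_in_coset[OF assms] by metis
  then obtain i where "i \<in> I" "x = y + i"
    unfolding coset_def ladd_eq_plus by auto
  then show "x - y \<in> I"
    by simp
next
  have subset: "coset x I \<subseteq> coset y I" if "x - y \<in> I" for x y
  proof
    fix z
    assume "z \<in> coset x I"
    then obtain i where "i \<in> I" "z = x + i"
      unfolding coset_def ladd_eq_plus by auto
    moreover have "(x - y) + i \<in> I"
      using assms that \<open>i \<in> I\<close> by (rule add_subgroup_add)
    ultimately show "z \<in> coset y I"
      unfolding coset_def ladd_eq_plus by (intro image_eqI[of _ _ "(x - y) + i"]) simp_all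
  qed
  assume "x - y \<in> I"
  moreover have "0 - (x - y) \<in> I"
    using assms add_subgroup_zero[OF assms] \<open>x - y \<in> I\<close> by (rule add_subgroup_diff)
  ultimately show "coset x I = coset y I"
    using subset[of x y] subset[of y x] by simp
qed

lemma rep_coset_diff:
  assumes "add_subgroup I"
  shows "rep (coset x I) - x \<in> I"
proof -
  have "rep (coset x I) \<in> coset x I"
    unfolding rep_def using self_in_coset[OF assms] by (rule someI)
  then show ?thesis
    unfolding coset_def ladd_eq_plus by auto
qed

lemma coset_rep_coset:
  assumes "add_subgroup I" "add_subgroup I'" "I \<subseteq> I'"
  shows "coset (rep (coset x I)) I' = coset x I'"
  unfolding coset_eq_iff[OF assms(2)] using rep_coset_diff[OF assms(1)] assms(3) by blast

lemma coset_rep: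
  assumes "add_subgroup I" "X \<in> quot I"
  shows "coset (rep X) I = X"
proof -
  obtain x where "X = coset x I"
    using assms(2) unfolding quot_def by blast
  then show ?thesis
    using coset_rep_coset[OF assms(1,1) subset_refl] by simp
qed

lemma rep_in_OA:
  assumes "X \<in> quot (OA_ideal A)"
  shows "rep X \<in> OA"
proof -
  obtain x where x: "x \<in> OA" "X = coset x (OA_ideal A)"
    using assms unfolding quot_def by blast
  have "rep X - x \<in> OA"
    using rep_coset_diff[OF add_subgroup_OA_ideal, of x A] OA_ideal_subset_OA x(2) by blast
  then have "x + (rep X - x) \<in> OA"
    using x(1) by (intro OA_add)
  then show ?thesis
    by simp
qed

lemma qadd_coset:
  assumes "add_subgroup I"
  shows "qadd I (coset x I) (coset y I) = coset (x + y) I"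
proof -
  have "(rep (coset x I) + rep (coset y I)) - (x + y)
      = (rep (coset x I) - x) + (rep (coset y I) - y)"
    by simp
  also have "\<dots> \<in> I"
    using assms by (intro add_subgroup_add rep_coset_diff)
  finally show ?thesis
    unfolding qadd_def ladd_eq_plus coset_eq_iff[OF assms] .
qed

lemma qsmult_coset: "qsmult (OA_ideal A) s (coset x (OA_ideal A)) = coset (lsmult s x) (OA_ideal A)"
  unfolding qsmult_def
  by (simp add: coset_eq_iff add_subgroup_OA_ideal lsmult_diff OA_ideal_lsmult rep_coset_diff)

lemma qbracket_coset:
  assumes "A dvd linv A" "x \<in> OA" "y \<in> OA"
  shows "qbracket (OA_ideal A) (coset x (OA_ideal A)) (coset y (OA_ideal A))
    = coset (lbracket x y) (OA_ideal A)"
proof -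
  let ?I = "OA_ideal A"
  let ?x' = "rep (coset x ?I)" and ?y' = "rep (coset y ?I)"
  have "?x' - x \<in> ?I" "?y' - y \<in> ?I"
    by (simp_all add: rep_coset_diff add_subgroup_OA_ideal)
  moreover have "?y' \<in> OA"
    using assms(3) by (intro rep_in_OA) (auto simp: quot_def)
  ultimately have "lbracket ?x' ?y' - lbracket x y \<in> ?I"
    unfolding lbracket_diff_diff using assms
    by (intro add_subgroup_add add_subgroup_OA_ideal OA_ideal_lbracket_left OA_ideal_lbracket_right)
  then show ?thesis
    unfolding qbracket_def by (simp add: coset_eq_iff add_subgroup_OA_ideal)
qed

lemma OA_ideal_prod:
  assumes "finite S" "pairwise (\<lambda>i j. comaximal (f i) (f j)) S"
    and "x \<in> OA" "\<And>j. j \<in> S \<Longrightarrow> x \<in> OA_ideal (f j)"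
  shows "x \<in> OA_ideal (prod f S)"
  using assms unfolding OA_ideal_def by (auto intro: prod_dvd_if_pairwise_comaximal)

lemma OA_chinese_remainder:
  assumes "finite S" "pairwise (\<lambda>i j. comaximal (f i) (f j)) S"
    and "\<And>j. j \<in> S \<Longrightarrow> f j dvd linv (f j)" "\<And>j. j \<in> S \<Longrightarrow> xs j \<in> OA"
  shows "\<exists>x\<in>OA. \<forall>j\<in>S. x - xs j \<in> OA_ideal (f j)"
proof -
  obtain p where p: "\<And>j. j \<in> S \<Longrightarrow> f j dvd p - fst (xs j)"
    using chinese_remainder_comaximal[OF assms(1,2), of "\<lambda>j. fst (xs j)"] by blast
  obtain q where q: "\<And>j. j \<in> S \<Longrightarrow> f j dvd q - snd (snd (xs j))"
    using chinese_remainder_comaximal[OF assms(1,2), of "\<lambda>j. snd (snd (xs j))"] by blast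
  define x where "x = (p, linv p, lconst (1/2) * (q - linv q))"
  have "x \<in> OA"
    unfolding x_def by (simp add: linv_antisymmetrization)
  moreover have "x - xs j \<in> OA_ideal (f j)" if j: "j \<in> S" for j
  proof -
    obtain a b c where xs: "xs j = (a, b, c)"
      by (cases "xs j")
    have "linv c = - c"
      using assms(4)[OF j] xs by simp
    then have "f j dvd lconst (1/2) * (q - linv q) - c"
      using assms(3)[OF j] q[OF j] xs by (intro dvd_antisymmetrization) auto
    moreover have "x - xs j \<in> OA"
      using \<open>x \<in> OA\<close> assms(4)[OF j] by (rule OA_diff)
    ultimately show ?thesis
      using p[OF j] xs by (simp add: x_def)
  qed
  ultimately show ?thesis
    by blast
qed

definition crt_map :: "('i \<Rightarrow> laurent) \<Rightarrow> 'i set \<Rightarrow> loopel set \<Rightarrow> 'i \<Rightarrow> loopel set" where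
  "crt_map f S X = (\<lambda>j\<in>S. coset (rep X) (OA_ideal (f j)))"

lemma crt_map_coset:
  assumes "\<And>j. j \<in> S \<Longrightarrow> f j dvd A"
  shows "crt_map f S (coset x (OA_ideal A)) = (\<lambda>j\<in>S. coset x (OA_ideal (f j)))"
  unfolding crt_map_def using assms
  by (intro restrict_ext coset_rep_coset add_subgroup_OA_ideal OA_ideal_antimono)

lemma crt_map_qadd:
  assumes "\<And>j. j \<in> S \<Longrightarrow> f j dvd A"
  shows "crt_map f S (qadd (OA_ideal A) X Y)
    = (\<lambda>j\<in>S. qadd (OA_ideal (f j)) (crt_map f S X j) (crt_map f S Y j))"
proof -
  have "crt_map f S (qadd (OA_ideal A) X Y) = (\<lambda>j\<in>S. coset (rep X + rep Y) (OA_ideal (f j)))"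
    unfolding qadd_def ladd_eq_plus by (rule crt_map_coset[OF assms])
  also have "\<dots> = (\<lambda>j\<in>S. qadd (OA_ideal (f j)) (crt_map f S X j) (crt_map f S Y j))"
    by (rule restrict_ext) (simp add: crt_map_def qadd_coset add_subgroup_OA_ideal)
  finally show ?thesis .
qed

lemma crt_map_qsmult:
  assumes "\<And>j. j \<in> S \<Longrightarrow> f j dvd A"
  shows "crt_map f S (qsmult (OA_ideal A) s X)
    = (\<lambda>j\<in>S. qsmult (OA_ideal (f j)) s (crt_map f S X j))"
proof -
  have "crt_map f S (qsmult (OA_ideal A) s X)
      = (\<lambda>j\<in>S. coset (lsmult s (rep X)) (OA_ideal (f j)))"
    unfolding qsmult_def by (rule crt_map_coset[OF assms])
  also have "\<dots> = (\<lambda>j\<in>S. qsmult (OA_ideal (f j)) s (crt_map f S X j))"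
    by (rule restrict_ext) (simp add: crt_map_def qsmult_coset)
  finally show ?thesis .
qed

lemma crt_map_qbracket:
  assumes "\<And>j. j \<in> S \<Longrightarrow> f j dvd A" "\<And>j. j \<in> S \<Longrightarrow> f j dvd linv (f j)"
    and "X \<in> quot (OA_ideal A)" "Y \<in> quot (OA_ideal A)"
  shows "crt_map f S (qbracket (OA_ideal A) X Y)
    = (\<lambda>j\<in>S. qbracket (OA_ideal (f j)) (crt_map f S X j) (crt_map f S Y j))"
proof -
  have "crt_map f S (qbracket (OA_ideal A) X Y)
      = (\<lambda>j\<in>S. coset (lbracket (rep X) (rep Y)) (OA_ideal (f j)))"
    unfolding qbracket_def by (rule crt_map_coset[OF assms(1)])
  also have "\<dots> = (\<lambda>j\<in>S. qbracket (OA_ideal (f j)) (crt_map f S X j) (crt_map f S Y j))"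
    using rep_in_OA[OF assms(3)] rep_in_OA[OF assms(4)]
    by (intro restrict_ext) (simp add: crt_map_def qbracket_coset assms(2))
  finally show ?thesis .
qed

lemma inj_on_crt_map:
  assumes "finite S" "pairwise (\<lambda>i j. comaximal (f i) (f j)) S"
  shows "inj_on (crt_map f S) (quot (OA_ideal (prod f S)))"
proof (rule inj_onI)
  fix X Y
  assume X: "X \<in> quot (OA_ideal (prod f S))" and Y: "Y \<in> quot (OA_ideal (prod f S))"
    and eq: "crt_map f S X = crt_map f S Y"
  have "rep X - rep Y \<in> OA"
    using X Y by (intro OA_diff rep_in_OA)
  moreover have "rep X - rep Y \<in> OA_ideal (f j)" if "j \<in> S" for j
    using fun_cong[OF eq, of j] that by (simp add: crt_map_def coset_eq_iff add_subgroup_OA_ideal)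
  ultimately have "rep X - rep Y \<in> OA_ideal (prod f S)"
    using assms by (intro OA_ideal_prod)
  then show "X = Y"
    using X Y coset_rep[OF add_subgroup_OA_ideal] coset_eq_iff[OF add_subgroup_OA_ideal] by metis
qed

lemma crt_map_image:
  assumes "finite S" "pairwise (\<lambda>i j. comaximal (f i) (f j)) S"
    and "\<And>j. j \<in> S \<Longrightarrow> f j dvd linv (f j)"
  shows "crt_map f S ` quot (OA_ideal (prod f S)) = (\<Pi>\<^sub>E j\<in>S. quot (OA_ideal (f j)))"
proof
  show "crt_map f S ` quot (OA_ideal (prod f S)) \<subseteq> (\<Pi>\<^sub>E j\<in>S. quot (OA_ideal (f j)))"
  proof
    fix F
    assume "F \<in> crt_map f S ` quot (OA_ideal (prod f S))"
    then obtain X where X: "X \<in> quot (OA_ideal (prod f S))" "F = crt_map f S X"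
      by blast
    have "rep X \<in> OA"
      using X(1) by (rule rep_in_OA)
    then show "F \<in> (\<Pi>\<^sub>E j\<in>S. quot (OA_ideal (f j)))"
      unfolding X(2) crt_map_def quot_def by auto
  qed
next
  show "(\<Pi>\<^sub>E j\<in>S. quot (OA_ideal (f j))) \<subseteq> crt_map f S ` quot (OA_ideal (prod f S))"
  proof
    fix F
    assume F: "F \<in> (\<Pi>\<^sub>E j\<in>S. quot (OA_ideal (f j)))"
    then obtain xs where xs: "\<And>j. j \<in> S \<Longrightarrow> xs j \<in> OA \<and> F j = coset (xs j) (OA_ideal (f j))"
      unfolding quot_def PiE_iff image_iff by metis
    then obtain x where x: "x \<in> OA" "\<And>j. j \<in> S \<Longrightarrow> x - xs j \<in> OA_ideal (f j)"
      using OA_chinese_remainder[OF assms] by metis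
    have "crt_map f S (coset x (OA_ideal (prod f S))) = (\<lambda>j\<in>S. coset x (OA_ideal (f j)))"
      using assms(1) by (intro crt_map_coset dvd_prodI)
    also have "\<dots> = (\<lambda>j\<in>S. F j)"
      using xs x(2) by (intro restrict_ext) (simp add: coset_eq_iff add_subgroup_OA_ideal)
    also have "\<dots> = F"
      using F by (rule PiE_restrict)
    finally show "F \<in> crt_map f S ` quot (OA_ideal (prod f S))"
      using x unfolding quot_def by blast
  qed
qed

theorem lemma1:
  fixes J :: nat and Ps :: "nat \<Rightarrow> complex poly"
  assumes recip: "\<And>j. j < J \<Longrightarrow> reciprocal (Ps j)"
    and coprime: "\<And>i j. i < J \<Longrightarrow> j < J \<Longrightarrow> i \<noteq> j \<Longrightarrow> coprime (Ps i) (Ps j)"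
  defines "P \<equiv> (\<Prod>j<J. Ps j)"
  shows "\<exists>\<phi>. (\<forall>x\<in>OA. \<phi> (coset x (Iid P)) = (\<lambda>j\<in>{..<J}. coset x (Iid (Ps j))))
    \<and> bij_betw \<phi> (quot (Iid P)) (\<Pi>\<^sub>E j\<in>{..<J}. quot (Iid (Ps j)))
    \<and> (\<forall>X\<in>quot (Iid P). \<forall>Y\<in>quot (Iid P).
          \<phi> (qadd (Iid P) X Y) = (\<lambda>j\<in>{..<J}. qadd (Iid (Ps j)) (\<phi> X j) (\<phi> Y j)))
    \<and> (\<forall>s. \<forall>X\<in>quot (Iid P).
          \<phi> (qsmult (Iid P) s X) = (\<lambda>j\<in>{..<J}. qsmult (Iid (Ps j)) s (\<phi> X j)))
    \<and> (\<forall>X\<in>quot (Iid P). \<forall>Y\<in>quot (Iid P).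
          \<phi> (qbracket (Iid P) X Y) = (\<lambda>j\<in>{..<J}. qbracket (Iid (Ps j)) (\<phi> X j) (\<phi> Y j)))"
proof -
  define f where "f j = of_cpoly (Ps j)" for j
  have P: "of_cpoly P = prod f {..<J}"
    unfolding P_def f_def by (rule of_cpoly_prod)
  have comaximal: "pairwise (\<lambda>i j. comaximal (f i) (f j)) {..<J}"
    unfolding pairwise_def f_def using coprime by (auto intro: comaximal_of_cpoly)
  have dvd_linv: "\<And>j. j \<in> {..<J} \<Longrightarrow> f j dvd linv (f j)"
    unfolding f_def using recip by (simp add: of_cpoly_dvd_linv)
  have dvd_P: "\<And>j. j \<in> {..<J} \<Longrightarrow> f j dvd prod f {..<J}"
    by (simp add: dvd_prodI)
  have bij: "bij_betw (crt_map f {..<J}) (quot (OA_ideal (prod f {..<J})))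
      (\<Pi>\<^sub>E j\<in>{..<J}. quot (OA_ideal (f j)))"
    unfolding bij_betw_def
    using inj_on_crt_map[OF finite_lessThan comaximal] crt_map_image[OF finite_lessThan comaximal dvd_linv]
    by (rule conjI)
  show ?thesis
    unfolding Iid_eq_OA_ideal P f_def[symmetric]
    by (intro exI[of _ "crt_map f {..<J}"] conjI ballI allI bij crt_map_coset crt_map_qadd
        crt_map_qsmult crt_map_qbracket dvd_P dvd_linv) assumption+
qed

end
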